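(* Let $T>0$, $\alpha\in(0,2)$, and let $E,F\subset(0,T)$ be as in the context. Consider the system \[ \begin{cases} y_t = A y + a(t)y+ b(t)z+ \chi_E(t)\chi_{G_1}(x) u, & (x,t) \in I\times(0,T),\\ z_t = \bar{A} z + c(t)y+ d(t)z+ \chi_F(t)\chi_{G_2}(x) u, & (x,t) \in I\times(0,T),\\ y(\cdot,0)=y_0,\quad z(\cdot,0)=z_0 & \text{in } I, \end{cases} \] with $y(0,t)=y(1,t)=z(1,t)=0$, and $z(0,t)=0$ if $0<\alpha<1$, $(x^\alpha z_x)(0,t)=0$ if $1\le\alpha<2$, and controls $u\in L^2(0,T;L^2(G_1\cup G_2))$. This system is not null controllable at time $T$ (i.e. there exists $(y_0,z_0)\in(L^2(I))^2$ for which no such control yields $y(T)=z(T)=0$) provided one of the following holds: (1) $\chi_E\equiv1$ on $(0,T)$ and $c=0$ a.e. in $(0,T)$; (2) $\chi_F\equiv1$ on $(0,T)$ and $b=0$ a.e. in $(0,T)$.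
   Context: $I=(0,1)$. $G_1,G_2\subset I$ are nonempty open sets with $G_1\cap G_2=\emptyset$; $\chi_S$ is the characteristic function of $S$. $a,b,c,d\in L^\infty(0,T;\mathbb{R})$ depend on $t$ only. The time sets are $E=\bigcup_{i\ge1}(t_{2i-1},t_{2i})$, $F=\bigcup_{i\ge1}(t_{2i},t_{2i+1})$ for points $t_j\in[0,T]$, with $(0,T)=E\cup F$ (apart from the endpoints) and $E\cap F=\emptyset$. $A$: $\mathcal D(A)=H^2(I)\cap H^1_0(I)$, $Av=v_{xx}$. $\bar A$: $\mathcal D(\bar A)=\{v\in H^1_\alpha(I): (x^\alpha v_x)_x\in L^2(I),\ BC_\alpha(v)=0\}$, $\bar A v=(x^\alpha v_x)_x$, where $H^1_\alpha(I)=\{v\in L^2(I): v$ absolutely continuous in $I$, $x^{\alpha/2}v_x\in L^2(I)$, $v(1)=0\}$, and $BC_\alpha(v)=v|_{x=0}$ if $\alpha\in(0,1)$, $BC_\alpha(v)=(x^\alpha v_x)|_{x=0}$ if $\alpha\in[1,2)$. *)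

theory Defs
  imports "HOL-Analysis.Analysis"
begin

text \<open>Elements of L^2(I), I = (0,1), are represented by Borel functions real => real;
  only their values on I (up to null sets) matter.\<close>

definition L2I :: "(real \<Rightarrow> real) \<Rightarrow> bool" where
  "L2I f \<longleftrightarrow> set_borel_measurable lborel {0<..<1} f
              \<and> set_integrable lborel {0<..<1} (\<lambda>x. (f x)^2)"

definition ipI :: "(real \<Rightarrow> real) \<Rightarrow> (real \<Rightarrow> real) \<Rightarrow> real" where
  "ipI f g = (LINT x:{0<..<1}|lborel. f x * g x)"

text \<open>Graph of the operator A: D(A) = H^2(I) \<inter> H^1_0(I), A v = v_xx.
  domA v w means v \<in> D(A) and A v = w.\<close>
definition domA :: "(real \<Rightarrow> real) \<Rightarrow> (real \<Rightarrow> real) \<Rightarrow> bool" where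
  "domA v w \<longleftrightarrow> L2I w
     \<and> (\<exists>c1. \<forall>x\<in>{0..1}. v x = (LINT s:{0<..<x}|lborel. c1 + (LINT r:{0<..<s}|lborel. w r)))
     \<and> v 1 = 0"

text \<open>v \<in> H^1_alpha(I) with derivative g: v \<in> L^2(I), v absolutely continuous in I,
  v(1) = 0 (i.e. v(x) = - \<integral>_x^1 g), and x^(alpha/2) v_x \<in> L^2(I).\<close>
definition H1a :: "real \<Rightarrow> (real \<Rightarrow> real) \<Rightarrow> (real \<Rightarrow> real) \<Rightarrow> bool" where
  "H1a \<alpha> v g \<longleftrightarrow> L2I v \<and> set_borel_measurable lborel {0<..<1} g
     \<and> (\<forall>x\<in>{0<..<1}. set_integrable lborel {x..1} g \<and> v x = - (LINT s:{x..1}|lborel. g s))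
     \<and> set_integrable lborel {0<..<1} (\<lambda>x. (x powr (\<alpha>/2) * g x)^2)"

text \<open>Graph of the degenerate operator Abar: Abar v = (x^alpha v_x)_x with
  (x^alpha v_x)_x \<in> L^2(I) and BC_alpha(v) = 0.\<close>
definition domAbar :: "real \<Rightarrow> (real \<Rightarrow> real) \<Rightarrow> (real \<Rightarrow> real) \<Rightarrow> bool" where
  "domAbar \<alpha> v w \<longleftrightarrow> L2I w
     \<and> (\<exists>g c. H1a \<alpha> v g
          \<and> (AE x in lborel. x \<in> {0<..<1} \<longrightarrow> x powr \<alpha> * g x = c + (LINT s:{0<..<x}|lborel. w s))
          \<and> (if \<alpha> < 1 then (v \<longlongrightarrow> 0) (at_right 0) else c = 0))"

definition Linfty :: "real \<Rightarrow> (real \<Rightarrow> real) \<Rightarrow> bool" where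
  "Linfty T a \<longleftrightarrow> a \<in> borel_measurable lborel
     \<and> (\<exists>M. AE s in lborel. s \<in> {0<..<T} \<longrightarrow> \<bar>a s\<bar> \<le> M)"

definition control_L2 :: "real \<Rightarrow> real set \<Rightarrow> (real \<Rightarrow> real \<Rightarrow> real) \<Rightarrow> bool" where
  "control_L2 T G u \<longleftrightarrow> (\<lambda>p. u (fst p) (snd p)) \<in> borel_measurable lborel
     \<and> set_integrable lborel ({0<..<T} \<times> G) (\<lambda>p::real\<times>real. (u (fst p) (snd p))^2)"

definition C_L2 :: "real \<Rightarrow> (real \<Rightarrow> real \<Rightarrow> real) \<Rightarrow> bool" where
  "C_L2 T y \<longleftrightarrow> (\<forall>t\<in>{0..T}. L2I (y t))
     \<and> (\<forall>t0\<in>{0..T}. ((\<lambda>t. ipI (\<lambda>x. y t x - y t0 x) (\<lambda>x. y t x - y t0 x)) \<longlongrightarrow> 0)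
                          (at t0 within {0..T}))"

text \<open>Weak (= mild, by Ball's theorem) solution of the coupled system, tested against
  the domains of the self-adjoint operators A and Abar.\<close>
definition is_solution ::
  "real \<Rightarrow> real \<Rightarrow> (real \<Rightarrow> real) \<Rightarrow> (real \<Rightarrow> real) \<Rightarrow> (real \<Rightarrow> real) \<Rightarrow> (real \<Rightarrow> real)
   \<Rightarrow> real set \<Rightarrow> real set \<Rightarrow> real set \<Rightarrow> real set \<Rightarrow> (real \<Rightarrow> real \<Rightarrow> real)
   \<Rightarrow> (real \<Rightarrow> real) \<Rightarrow> (real \<Rightarrow> real) \<Rightarrow> (real \<Rightarrow> real \<Rightarrow> real) \<Rightarrow> (real \<Rightarrow> real \<Rightarrow> real) \<Rightarrow> bool" where
  "is_solution \<alpha> T a b c d E F G1 G2 u y0 z0 y z \<longleftrightarrow>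
     C_L2 T y \<and> C_L2 T z
     \<and> (\<forall>v w. domA v w \<longrightarrow> (\<forall>t\<in>{0..T}.
          let f = (\<lambda>s. ipI (y s) w + a s * ipI (y s) v + b s * ipI (z s) v
                        + indicator E s * ipI (\<lambda>x. indicator G1 x * u s x) v)
          in set_integrable lborel {0..t} f
             \<and> ipI (y t) v = ipI y0 v + (LINT s:{0..t}|lborel. f s)))
     \<and> (\<forall>v w. domAbar \<alpha> v w \<longrightarrow> (\<forall>t\<in>{0..T}.
          let f = (\<lambda>s. ipI (z s) w + c s * ipI (y s) v + d s * ipI (z s) v
                        + indicator F s * ipI (\<lambda>x. indicator G2 x * u s x) v)
          in set_integrable lborel {0..t} f
             \<and> ipI (z t) v = ipI z0 v + (LINT s:{0..t}|lborel. f s)))"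

end

theory Submission
  imports Defs
begin

text \<open>Under (1) the control never acts on the \<open>z\<close>-equation and \<open>y\<close> does not enter it, so for
  an eigenfunction \<open>v\<close> of \<open>Abar\<close>, \<open>Abar v = \<lambda> v\<close>, the weak formulation shows that the mode
  \<open>h(t) = \<langle>z(t), v\<rangle>\<close> solves the scalar linear equation \<open>h' = (\<lambda> + d(t)) h\<close>. Such an
  equation is backward unique, so \<open>h(T) = 0\<close> forces \<open>\<langle>z\<^sub>0, v\<rangle> = 0\<close>, and the initial state
  \<open>(0, v)\<close> cannot be driven to rest. Case (2) is symmetric, with \<open>A\<close> and \<open>sin (\<pi> x)\<close>.
  The eigenfunctions of \<open>Abar\<close> are \<open>x^((1-\<alpha>)/2) J\<^sub>\<nu>(c x^((2-\<alpha>)/2))\<close> with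
  \<open>\<nu> = |1-\<alpha>|/(2-\<alpha>)\<close> and \<open>c\<close> chosen so that \<open>v(1) = 0\<close>.\<close>

section \<open>Backward uniqueness for linear Volterra equations\<close>

lemma set_integral_Icc_split:
  fixes f :: "real \<Rightarrow> real"
  assumes "set_integrable lborel {0..\<tau>} f" "0 \<le> t" "t \<le> \<tau>"
  shows "(LINT s:{0..\<tau>}|lborel. f s) = (LINT s:{0..t}|lborel. f s) + (LINT s:{t<..\<tau>}|lborel. f s)"
proof -
  have "{0..\<tau>} = {0..t} \<union> {t<..\<tau>}" "{0..t} \<inter> {t<..\<tau>} = {}" using assms by auto
  moreover have "set_integrable lborel {0..t} f" "set_integrable lborel {t<..\<tau>} f"
    by (rule set_integrable_subset[OF assms(1)]; use assms in auto)+
  ultimately show ?thesis by (simp add: set_integral_Un)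
qed

lemma volterra_local_backward_uniqueness:
  fixes h k f :: "real \<Rightarrow> real"
  assumes int: "set_integrable lborel {0..T} f"
    and eq: "\<And>t. t \<in> {0..T} \<Longrightarrow> h t = h0 + (LINT s:{0..t}|lborel. f s)"
    and ae: "AE s in lborel. s \<in> {0<..<T} \<longrightarrow> f s = k s * h s"
    and bd: "AE s in lborel. s \<in> {0<..<T} \<longrightarrow> \<bar>k s\<bar> \<le> K"
    and hB: "\<And>t. t \<in> {0..T} \<Longrightarrow> \<bar>h t\<bar> \<le> B"
    and \<tau>: "\<tau> \<in> {0..T}" "h \<tau> = 0"
    and K: "K > 0"
    and t: "0 \<le> t" "t \<le> \<tau>" "\<tau> - t \<le> 1 / (2 * K)"
  shows "h t = 0"
proof -
  have B: "B \<ge> 0" using hB[OF \<tau>(1)] by linarith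
  \<comment> \<open>Within distance \<open>1/(2K)\<close> left of a zero, \<open>|h x| \<le> K (\<tau> - x) sup |h|\<close> halves
    any bound on \<open>|h|\<close>.\<close>
  have halving: "\<bar>h x\<bar> \<le> B / 2^n" if x: "0 \<le> x" "x \<le> \<tau>" "\<tau> - x \<le> 1 / (2 * K)" for n x
    using x
  proof (induction n arbitrary: x)
    case 0
    then show ?case using hB \<tau> by auto
  next
    case (Suc n)
    have int_x: "set_integrable lborel {x<..\<tau>} f"
      by (rule set_integrable_subset[OF int]) (use Suc.prems \<tau> in auto)
    have "h \<tau> - h x = (LINT s:{x<..\<tau>}|lborel. f s)"
      using eq[of \<tau>] eq[of x] \<tau> Suc.prems
        set_integral_Icc_split[OF set_integrable_subset[OF int], of \<tau> x] by auto
    then have "\<bar>h x\<bar> = \<bar>LINT s:{x<..\<tau>}|lborel. f s\<bar>" using \<tau> by simp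
    also have "\<dots> \<le> (LINT s:{x<..\<tau>}|lborel. \<bar>f s\<bar>)"
      using set_integral_norm_bound[OF int_x] by simp
    also have "\<dots> \<le> (LINT s:{x<..\<tau>}|lborel. K * (B / 2^n))"
    proof (rule set_integral_mono_AE[OF set_integrable_abs[OF int_x]])
      show "set_integrable lborel {x<..\<tau>} (\<lambda>s. K * (B / 2^n))"
        by (rule set_integrable_subset[OF borel_integrable_atLeastAtMost'[of x \<tau>]]) auto
      show "AE s\<in>{x<..\<tau>} in lborel. \<bar>f s\<bar> \<le> K * (B / 2 ^ n)"
        using ae bd AE_lborel_singleton[of T]
      proof eventually_elim
        case (elim s)
        show ?case
        proof
          assume s: "s \<in> {x<..\<tau>}"
          then have "s \<in> {0<..<T}" using elim(3) Suc.prems \<tau> by auto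
          then have "\<bar>f s\<bar> = \<bar>k s\<bar> * \<bar>h s\<bar>" "\<bar>k s\<bar> \<le> K"
            using elim by (auto simp: abs_mult)
          moreover have "\<bar>h s\<bar> \<le> B / 2^n" using Suc.IH[of s] s Suc.prems by auto
          ultimately show "\<bar>f s\<bar> \<le> K * (B / 2 ^ n)"
            using K by (metis abs_ge_zero mult_mono order.strict_implies_order)
        qed
      qed
    qed
    also have "\<dots> = (\<tau> - x) * K * (B / 2^n)"
      using Suc.prems by (simp add: set_integral_const)
    also have "\<dots> \<le> 1 / 2 * (B / 2^n)"
      using Suc.prems K B by (intro mult_right_mono) (auto simp: field_simps)
    finally show ?case by simp
  qed
  have "(\<lambda>n. B / 2^n) \<longlonglongrightarrow> 0"
    by (intro LIMSEQ_divide_realpow_zero) auto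
  then have "\<bar>h t\<bar> \<le> 0"
    by (rule LIMSEQ_le_const) (use halving t in auto)
  then show ?thesis by simp
qed

lemma volterra_backward_uniqueness:
  fixes h k f :: "real \<Rightarrow> real"
  assumes T: "T > 0"
    and int: "set_integrable lborel {0..T} f"
    and eq: "\<And>t. t \<in> {0..T} \<Longrightarrow> h t = h0 + (LINT s:{0..t}|lborel. f s)"
    and ae: "AE s in lborel. s \<in> {0<..<T} \<longrightarrow> f s = k s * h s"
    and bd: "AE s in lborel. s \<in> {0<..<T} \<longrightarrow> \<bar>k s\<bar> \<le> M"
    and hT: "h T = 0"
  shows "h0 = 0"
proof -
  define K where "K = \<bar>M\<bar> + 1"
  define \<delta> where "\<delta> = 1 / (2 * K)"
  have K: "K > 0" and \<delta>: "\<delta> > 0" by (simp_all add: K_def \<delta>_def add_pos_nonneg)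
  have bdK: "AE s in lborel. s \<in> {0<..<T} \<longrightarrow> \<bar>k s\<bar> \<le> K"
    using bd by eventually_elim (auto simp: K_def)
  define B where "B = \<bar>h0\<bar> + (LINT s:{0..T}|lborel. \<bar>f s\<bar>)"
  have hB: "\<bar>h t\<bar> \<le> B" if t: "t \<in> {0..T}" for t
  proof -
    have int_t: "set_integrable lborel {0..t} f"
      by (rule set_integrable_subset[OF int]) (use t in auto)
    have "0 \<le> (LINT s:{t<..T}|lborel. \<bar>f s\<bar>)"
      unfolding set_lebesgue_integral_def by (rule integral_nonneg_AE) (auto simp: indicator_def)
    moreover have "\<bar>LINT s:{0..t}|lborel. f s\<bar> \<le> (LINT s:{0..t}|lborel. \<bar>f s\<bar>)"
      using set_integral_norm_bound[OF int_t] by simp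
    ultimately show ?thesis
      using eq[OF t] set_integral_Icc_split[OF set_integrable_abs[OF int], of t] t
      unfolding B_def by auto
  qed
  have vanish: "h t = 0" if "T - real n * \<delta> \<le> t" "t \<in> {0..T}" for n t
    using that
  proof (induction n arbitrary: t)
    case 0
    then show ?case using hT by auto
  next
    case (Suc n)
    show ?case
    proof (cases "T - real n * \<delta> \<le> t")
      case True
      then show ?thesis using Suc by blast
    next
      case False
      define \<tau> where "\<tau> = T - real n * \<delta>"
      have \<tau>: "\<tau> \<in> {0..T}" "t \<le> \<tau>" "\<tau> - t \<le> \<delta>"
        using False Suc.prems \<delta> by (auto simp: \<tau>_def algebra_simps)
      have "h \<tau> = 0" using Suc.IH \<tau> by (auto simp: \<tau>_def)
      then show ?thesis
        using volterra_local_backward_uniqueness[OF int eq ae bdK hB \<tau>(1) _ K] Suc.prems \<tau>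
        unfolding \<delta>_def by auto
    qed
  qed
  obtain n :: nat where "real n > T / \<delta>" using reals_Archimedean2 by blast
  then have "h 0 = 0" using vanish[of n 0] T \<delta> by (simp add: field_simps)
  moreover have "(LINT s:{0..0}|lborel. f s) = 0"
    unfolding set_lebesgue_integral_def
    by (rule integral_eq_zero_AE) (use AE_lborel_singleton[of 0] in \<open>auto elim!: eventually_mono\<close>)
  ultimately show ?thesis using eq[of 0] T by simp
qed

section \<open>Integrals of continuous functions on the unit interval\<close>

lemma set_integrable_greaterThanLessThan_continuous:
  fixes f :: "real \<Rightarrow> real"
  assumes "continuous_on {a..b} f"
  shows "set_integrable lborel {a<..<b} f"
  by (rule set_integrable_subset[OF borel_integrable_atLeastAtMost'[OF assms]]) auto

lemma set_borel_measurable_greaterThanLessThan_continuous: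
  fixes f :: "real \<Rightarrow> real"
  assumes "continuous_on {a<..<b} f"
  shows "set_borel_measurable lborel {a<..<b} f"
  unfolding set_borel_measurable_def
  using borel_measurable_continuous_on_indicator[OF _ assms] by simp

lemma set_integral_greaterThanLessThan_FTC:
  fixes F f :: "real \<Rightarrow> real"
  assumes "a \<le> b" "continuous_on {a..b} F"
    "\<And>x. a < x \<Longrightarrow> x < b \<Longrightarrow> (F has_real_derivative f x) (at x)"
    "set_integrable lborel {a<..<b} f"
  shows "(LINT x:{a<..<b}|lborel. f x) = F b - F a"
proof -
  have "(LINT x:{a<..<b}|lborel. f x) = integral {a<..<b} f"
    by (rule set_borel_integral_eq_integral(2)[OF assms(4)])
  also have "\<dots> = integral {a..b} f" by (simp add: integral_open_interval_real)
  also have "\<dots> = F b - F a"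
    by (rule integral_unique[OF fundamental_theorem_of_calculus_interior])
       (use assms in \<open>auto simp: has_real_derivative_iff_has_vector_derivative\<close>)
  finally show ?thesis .
qed

lemma set_integral_atLeastAtMost_FTC:
  fixes F f :: "real \<Rightarrow> real"
  assumes "a \<le> b" "continuous_on {a..b} F"
    "\<And>x. a < x \<Longrightarrow> x < b \<Longrightarrow> (F has_real_derivative f x) (at x)"
    "continuous_on {a..b} f"
  shows "(LINT x:{a..b}|lborel. f x) = F b - F a"
proof -
  have "(LINT x:{a..b}|lborel. f x) = integral {a..b} f"
    by (rule set_borel_integral_eq_integral(2)[OF borel_integrable_atLeastAtMost'[OF assms(4)]])
  also have "\<dots> = F b - F a"
    by (rule integral_unique[OF fundamental_theorem_of_calculus_interior])
       (use assms in \<open>auto simp: has_real_derivative_iff_has_vector_derivative\<close>)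
  finally show ?thesis .
qed

lemma continuous_on_powr_atLeastAtMost_0 [continuous_intros]:
  "r > 0 \<Longrightarrow> continuous_on {0..b} (\<lambda>x::real. x powr r)"
  by (intro continuous_on_powr') (auto intro: continuous_intros)

lemma set_integrable_powr_01:
  assumes "a > -1"
  shows "set_integrable lborel {0<..<1} (\<lambda>x::real. x powr a)"
proof -
  have "(\<lambda>x::real. x powr a) integrable_on {0..1}"
    by (rule integrable_on_powr_from_0) (use assms in auto)
  then have "(\<lambda>x::real. x powr a) absolutely_integrable_on {0..1}"
    by (subst absolutely_integrable_on_iff_nonneg) auto
  then have "set_integrable lborel {0..1} (\<lambda>x::real. x powr a)"
    unfolding set_integrable_def by (subst (asm) integrable_completion) auto
  then show ?thesis by (rule set_integrable_subset) auto
qed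

lemma L2I_continuous:
  assumes "continuous_on {0..1} f"
  shows "L2I f"
  unfolding L2I_def
proof
  show "set_borel_measurable lborel {0<..<1} f"
    by (rule set_borel_measurable_greaterThanLessThan_continuous)
       (rule continuous_on_subset[OF assms], auto)
  show "set_integrable lborel {0<..<1} (\<lambda>x. (f x)\<^sup>2)"
    by (rule set_integrable_greaterThanLessThan_continuous) (intro continuous_intros assms)
qed

lemma L2I_zero: "L2I (\<lambda>x. 0)"
  by (rule L2I_continuous) simp

lemma ipI_self_pos:
  assumes v: "continuous_on {0..1} v" and x0: "x0 \<in> {0..1}" "v x0 \<noteq> 0"
  shows "ipI v v > 0"
proof -
  have cont: "continuous_on {0..1} (\<lambda>x. v x * v x)" by (intro continuous_intros v)
  have "ipI v v = integral {0..1} (\<lambda>x. v x * v x)"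
    unfolding ipI_def
    by (simp add: set_borel_integral_eq_integral(2)[OF set_integrable_greaterThanLessThan_continuous[OF cont]]
        integral_open_interval_real)
  moreover have "integral {0..1} (\<lambda>x. v x * v x) \<ge> 0"
    by (rule integral_nonneg[OF integrable_continuous_real[OF cont]]) simp
  moreover have "integral {0..1} (\<lambda>x. v x * v x) \<noteq> 0"
    using integral_eq_0_iff[OF cont] x0 by auto
  ultimately show ?thesis by linarith
qed

lemma continuous_on_nonzero_near_0:
  fixes V :: "real \<Rightarrow> real"
  assumes "continuous_on {0..1} V" "V 0 \<noteq> 0"
  obtains x where "x \<in> {0<..<1}" "V x \<noteq> 0"
proof -
  have "(V \<longlongrightarrow> V 0) (at 0 within {0..1})"
    using assms(1) unfolding continuous_on_def by simp
  then have "(V \<longlongrightarrow> V 0) (at_right 0)"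
    by (simp add: at_within_Icc_at_right)
  then have "eventually (\<lambda>x. V x \<noteq> 0) (at_right 0)"
    using assms(2) by (rule tendsto_imp_eventually_ne)
  moreover have "eventually (\<lambda>x. x \<in> {0<..<1}) (at_right (0::real))"
    by (simp add: eventually_at_right_field) (metis zero_less_one)
  ultimately have "eventually (\<lambda>x. x \<in> {0<..<1} \<and> V x \<noteq> 0) (at_right 0)"
    by eventually_elim auto
  then show ?thesis using that eventually_happens' trivial_limit_at_right_real by blast
qed

lemma ipI_scale_right: "ipI g (\<lambda>x. c * v x) = c * ipI g v"
proof -
  have "ipI g (\<lambda>x. c * v x) = (LINT x:{0<..<1}|lborel. c * (g x * v x))"
    unfolding ipI_def by (simp add: ac_simps)
  then show ?thesis unfolding ipI_def by simp
qed

lemma ipI_AE_zero_left: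
  assumes "AE x in lborel. x \<in> {0<..<1} \<longrightarrow> f x = 0"
  shows "ipI f v = 0"
  unfolding ipI_def set_lebesgue_integral_def
  by (rule integral_eq_zero_AE) (use assms in \<open>auto elim!: eventually_mono simp: indicator_def\<close>)

section \<open>A normalised Bessel function\<close>

text \<open>\<open>bessel_J \<nu> s = \<Gamma>(\<nu>+1) s^(-\<nu>/2) J\<^sub>\<nu>(2\<surd>s)\<close>: the entire solution of
  \<open>s f'' + (\<nu>+1) f' + f = 0\<close> with \<open>f 0 = 1\<close>.\<close>

definition bessel_coeff :: "real \<Rightarrow> nat \<Rightarrow> real" where
  "bessel_coeff \<nu> k = (-1)^k / (fact k * pochhammer (\<nu> + 1) k)"

definition bessel_J :: "real \<Rightarrow> real \<Rightarrow> real" where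
  "bessel_J \<nu> s = (\<Sum>k. bessel_coeff \<nu> k * s^k)"

definition bessel_J' :: "real \<Rightarrow> real \<Rightarrow> real" where
  "bessel_J' \<nu> s = (\<Sum>k. diffs (bessel_coeff \<nu>) k * s^k)"

definition bessel_J'' :: "real \<Rightarrow> real \<Rightarrow> real" where
  "bessel_J'' \<nu> s = (\<Sum>k. diffs (diffs (bessel_coeff \<nu>)) k * s^k)"

lemma pochhammer_ge_1:
  fixes \<nu> :: real
  assumes "\<nu> \<ge> 0"
  shows "pochhammer (\<nu> + 1) k \<ge> 1"
proof (induction k)
  case (Suc k)
  have "1 * 1 \<le> pochhammer (\<nu> + 1) k * (\<nu> + 1 + of_nat k)"
    using Suc assms by (intro mult_mono) auto
  then show ?case by (simp add: pochhammer_Suc)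
qed simp

lemma summable_bessel_series:
  assumes "\<nu> \<ge> 0"
  shows "summable (\<lambda>k. bessel_coeff \<nu> k * s^k)"
proof (rule summable_comparison_test'[OF summable_exp[of "\<bar>s\<bar>"]])
  fix k :: nat
  have p: "pochhammer (\<nu> + 1) k \<ge> 1" using pochhammer_ge_1[OF assms] .
  have "norm (bessel_coeff \<nu> k * s^k) = \<bar>s\<bar>^k / fact k / pochhammer (\<nu> + 1) k"
    using p by (simp add: bessel_coeff_def abs_mult power_abs)
  also have "\<dots> \<le> \<bar>s\<bar>^k / fact k"
    using p by (simp add: divide_le_eq mult_le_cancel_left1)
  finally show "norm (bessel_coeff \<nu> k * s^k) \<le> inverse (fact k) * \<bar>s\<bar>^k"
    by (simp add: field_simps)
qed

lemma bessel_J_has_real_derivative: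
  "\<nu> \<ge> 0 \<Longrightarrow> (bessel_J \<nu> has_real_derivative bessel_J' \<nu> s) (at s)"
  unfolding bessel_J_def[abs_def] bessel_J'_def
  by (rule termdiffs_strong_converges_everywhere) (rule summable_bessel_series)

lemma bessel_J'_has_real_derivative:
  "\<nu> \<ge> 0 \<Longrightarrow> (bessel_J' \<nu> has_real_derivative bessel_J'' \<nu> s) (at s)"
  unfolding bessel_J'_def[abs_def] bessel_J''_def
  by (rule termdiffs_strong_converges_everywhere)
     (rule termdiff_converges_all, rule summable_bessel_series)

lemma bessel_J_0 [simp]: "bessel_J \<nu> 0 = 1"
  unfolding bessel_J_def by (subst powser_zero) (simp add: bessel_coeff_def)

lemma bessel_coeff_Suc:
  assumes "\<nu> \<ge> 0"
  shows "(of_nat k + \<nu> + 1) * (of_nat (Suc k) * bessel_coeff \<nu> (Suc k)) = - bessel_coeff \<nu> k"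
proof -
  have "pochhammer (\<nu> + 1) k \<noteq> 0" "\<nu> + 1 + of_nat k \<noteq> 0"
    using pochhammer_ge_1[OF assms, of k] assms by auto
  then have "bessel_coeff \<nu> (Suc k) * (of_nat (Suc k) * (\<nu> + 1 + of_nat k)) = - bessel_coeff \<nu> k"
    unfolding bessel_coeff_def by (simp add: pochhammer_Suc)
  then show ?thesis by (simp add: algebra_simps)
qed

lemma bessel_J_ode:
  assumes \<nu>: "\<nu> \<ge> 0"
  shows "s * bessel_J'' \<nu> s = - (\<nu> + 1) * bessel_J' \<nu> s - bessel_J \<nu> s"
proof -
  define c where "c = bessel_coeff \<nu>"
  have sum: "summable (\<lambda>k. c k * s^k)" "summable (\<lambda>k. diffs c k * s^k)"
    "summable (\<lambda>k. diffs (diffs c) k * s^k)"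
    unfolding c_def using summable_bessel_series[OF \<nu>]
    by (auto intro!: termdiff_converges_all)
  \<comment> \<open>\<open>s J''\<close> is the series with coefficients \<open>k c'\<^sub>k\<close>, shifted by one.\<close>
  define f where "f = (\<lambda>k. of_nat k * diffs c k * s^k)"
  have "(\<lambda>k. f (Suc k)) = (\<lambda>k. diffs (diffs c) k * s^k * s)"
    by (auto simp: f_def diffs_def fun_eq_iff)
  then have "(\<lambda>k. f (Suc k)) sums (bessel_J'' \<nu> s * s)"
    using sums_mult2[OF summable_sums[OF sum(3)]] unfolding bessel_J''_def c_def by simp
  then have s1: "f sums (s * bessel_J'' \<nu> s)"
    by (subst (asm) sums_Suc_iff) (simp add: f_def mult.commute)
  have "(\<lambda>k. f k + (\<nu> + 1) * (diffs c k * s^k) + c k * s^k) sums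
        (s * bessel_J'' \<nu> s + (\<nu> + 1) * bessel_J' \<nu> s + bessel_J \<nu> s)"
    using s1 sums_mult[OF summable_sums[OF sum(2)]] summable_sums[OF sum(1)]
    unfolding bessel_J_def bessel_J'_def c_def by (intro sums_add) auto
  moreover have "(\<lambda>k. f k + (\<nu> + 1) * (diffs c k * s^k) + c k * s^k) = (\<lambda>k. 0)"
  proof
    fix k
    have "f k + (\<nu> + 1) * (diffs c k * s^k) + c k * s^k
        = ((of_nat k + \<nu> + 1) * (of_nat (Suc k) * c (Suc k)) + c k) * s^k"
      unfolding f_def diffs_def by (simp add: algebra_simps)
    then show "f k + (\<nu> + 1) * (diffs c k * s^k) + c k * s^k = 0"
      using bessel_coeff_Suc[OF \<nu>] by (simp add: c_def)
  qed
  ultimately have "s * bessel_J'' \<nu> s + (\<nu> + 1) * bessel_J' \<nu> s + bessel_J \<nu> s = 0"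
    by (metis sums_unique2 sums_zero)
  then show ?thesis by (simp add: algebra_simps)
qed

lemma continuous_on_bessel_J [continuous_intros]:
  "\<nu> \<ge> 0 \<Longrightarrow> continuous_on A g \<Longrightarrow> continuous_on A (\<lambda>x. bessel_J \<nu> (g x))"
  by (rule continuous_on_compose2[of UNIV, OF continuous_at_imp_continuous_on])
     (auto intro: DERIV_isCont bessel_J_has_real_derivative)

lemma continuous_on_bessel_J' [continuous_intros]:
  "\<nu> \<ge> 0 \<Longrightarrow> continuous_on A g \<Longrightarrow> continuous_on A (\<lambda>x. bessel_J' \<nu> (g x))"
  by (rule continuous_on_compose2[of UNIV, OF continuous_at_imp_continuous_on])
     (auto intro: DERIV_isCont bessel_J'_has_real_derivative)

lemma bessel_J_combination_has_real_derivative: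
  assumes \<nu>: "\<nu> \<ge> 0"
  shows "((\<lambda>s. \<nu> * bessel_J \<nu> s + s * bessel_J' \<nu> s) has_real_derivative - bessel_J \<nu> s) (at s)"
proof -
  have "((\<lambda>s. \<nu> * bessel_J \<nu> s + s * bessel_J' \<nu> s) has_real_derivative
      \<nu> * bessel_J' \<nu> s + (bessel_J' \<nu> s + s * bessel_J'' \<nu> s)) (at s)"
    using \<nu> by (auto intro!: derivative_eq_intros bessel_J_has_real_derivative
        bessel_J'_has_real_derivative)
  then show ?thesis using bessel_J_ode[OF \<nu>, of s] by (simp add: algebra_simps)
qed

text \<open>If \<open>J = bessel_J \<nu>\<close> had no positive zero, then with \<open>S = (\<nu>+2)\<^sup>2\<close> the function
  \<open>W s = s^(\<nu>+1) (-2 (S-s) J s - (S-s)\<^sup>2 J' s)\<close> would satisfy \<open>W 0 = W S = 0\<close>, while by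
  the differential equation \<open>W' s = s^\<nu> J s ((S-s-(\<nu>+2))\<^sup>2 + (\<nu>+2)\<^sup>2) > 0\<close> on \<open>(0,S)\<close>.\<close>

lemma bessel_J_has_positive_zero:
  assumes \<nu>: "\<nu> \<ge> 0"
  shows "\<exists>\<kappa>>0. bessel_J \<nu> \<kappa> = 0"
proof (rule ccontr)
  assume no_zero: "\<not> (\<exists>\<kappa>>0. bessel_J \<nu> \<kappa> = 0)"
  have cont: "continuous_on A (bessel_J \<nu>)" for A
    using continuous_on_bessel_J[OF \<nu> continuous_on_id] by simp
  have pos: "bessel_J \<nu> s > 0" if s: "s \<ge> 0" for s
  proof (rule ccontr)
    assume "\<not> bessel_J \<nu> s > 0"
    then obtain x where "0 \<le> x" "x \<le> s" "bessel_J \<nu> x = 0"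
      using IVT2'[of "bessel_J \<nu>" s 0 0] s cont by auto
    with no_zero show False by (cases "x = 0") auto
  qed
  define S where "S = (\<nu> + 2)^2"
  have S: "S > 0" using \<nu> by (simp add: S_def)
  define W where "W = (\<lambda>s. s powr (\<nu> + 1) * (bessel_J \<nu> s * (-2 * (S - s)) - (S - s)^2 * bessel_J' \<nu> s))"
  have "W 0 < W S"
  proof (rule DERIV_pos_imp_increasing_open[OF S])
    show "continuous_on {0..S} W"
      unfolding W_def using \<nu> by (intro continuous_intros continuous_on_powr') auto
    fix s assume s: "0 < s" "s < S"
    define J J' J'' where "J = bessel_J \<nu> s" and "J' = bessel_J' \<nu> s" and "J'' = bessel_J'' \<nu> s"
    define W' where "W' = (\<nu> + 1) * s powr \<nu> * (J * (-2 * (S - s)) - (S - s)^2 * J')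
        + s powr (\<nu> + 1) * (2 * J - (S - s)^2 * J'')"
    have "(W has_real_derivative W') (at s)"
      unfolding W_def W'_def J_def J'_def J''_def using s \<nu>
      by (auto intro!: derivative_eq_intros bessel_J_has_real_derivative bessel_J'_has_real_derivative
          simp: algebra_simps power2_eq_square)
    moreover have "W' = s powr \<nu> * J * (((S - s) - (\<nu> + 2))^2 + (\<nu> + 2)^2)"
    proof -
      have ode: "s * J'' = - (\<nu> + 1) * J' - J"
        unfolding J_def J'_def J''_def by (rule bessel_J_ode[OF \<nu>])
      have "W' = s powr \<nu> * (J * (-2 * (\<nu> + 1) * (S - s)) + 2 * s * J - (S - s)^2 * (s * J'')
          - (\<nu> + 1) * (S - s)^2 * J')"
        using s unfolding W'_def by (simp add: powr_add algebra_simps)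
      then show ?thesis
        unfolding ode S_def by (simp add: algebra_simps power2_eq_square)
    qed
    moreover have "s powr \<nu> * J * (((S - s) - (\<nu> + 2))^2 + (\<nu> + 2)^2) > 0"
      using pos[of s] s \<nu> unfolding J_def by (intro mult_pos_pos) (auto intro: add_nonneg_pos)
    ultimately show "\<exists>y. (W has_real_derivative y) (at s) \<and> 0 < y" by blast
  qed
  then show False by (simp add: W_def)
qed

section \<open>Eigenfunctions of \<open>A\<close> and \<open>Abar\<close>\<close>

lemma domA_sin: "domA (\<lambda>x. sin (pi * x)) (\<lambda>x. - (pi\<^sup>2) * sin (pi * x))"
  unfolding domA_def
proof (intro conjI exI ballI)
  show "L2I (\<lambda>x. - (pi\<^sup>2) * sin (pi * x))"
    by (rule L2I_continuous) (intro continuous_intros)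
  fix x :: real assume x: "x \<in> {0..1}"
  have inner: "(LINT r:{0<..<s}|lborel. - (pi\<^sup>2) * sin (pi * r)) = pi * cos (pi * s) - pi"
    if "s \<ge> 0" for s
  proof -
    have "(LINT r:{0<..<s}|lborel. - (pi\<^sup>2) * sin (pi * r)) = pi * cos (pi * s) - pi * cos (pi * 0)"
      by (rule set_integral_greaterThanLessThan_FTC[OF that])
        (auto simp: power2_eq_square intro!: continuous_intros derivative_eq_intros
          set_integrable_greaterThanLessThan_continuous)
    then show ?thesis by simp
  qed
  have "(LINT s:{0<..<x}|lborel. pi + (LINT r:{0<..<s}|lborel. - (pi\<^sup>2) * sin (pi * r)))
      = (LINT s:{0<..<x}|lborel. pi * cos (pi * s))"
    using inner by (intro set_lebesgue_integral_cong) (auto simp del: mult_minus_left)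
  also have "\<dots> = sin (pi * x) - sin (pi * 0)"
    by (rule set_integral_greaterThanLessThan_FTC)
      (use x in \<open>auto intro!: continuous_intros derivative_eq_intros
        set_integrable_greaterThanLessThan_continuous\<close>)
  finally show "sin (pi * x)
      = (LINT s:{0<..<x}|lborel. pi + (LINT r:{0<..<s}|lborel. - (pi\<^sup>2) * sin (pi * r)))"
    by simp
qed simp

lemma eigenfunction_A:
  obtains v lam where "domA v (\<lambda>x. lam * v x)" "L2I v" "ipI v v > 0"
proof
  show "domA (\<lambda>x. sin (pi * x)) (\<lambda>x. - (pi\<^sup>2) * sin (pi * x))" by (rule domA_sin)
  show "L2I (\<lambda>x. sin (pi * x))" by (rule L2I_continuous) (intro continuous_intros)
  show "ipI (\<lambda>x. sin (pi * x)) (\<lambda>x. sin (pi * x)) > 0"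
    by (rule ipI_self_pos[of _ "1/2"]) (auto intro!: continuous_intros)
qed

lemma set_integrable_weighted_square:
  fixes g R :: "real \<Rightarrow> real"
  assumes g: "continuous_on {0<..<1} g" and R: "continuous_on {0..1} R"
    and flux: "\<And>x. 0 < x \<Longrightarrow> x < 1 \<Longrightarrow> x powr \<alpha> * g x = x powr \<beta> * R x"
    and exponent: "2 * \<beta> - \<alpha> > -1"
  shows "set_integrable lborel {0<..<1} (\<lambda>x. (x powr (\<alpha> / 2) * g x)\<^sup>2)"
proof -
  obtain B where B: "\<And>x. x \<in> {0..1} \<Longrightarrow> \<bar>R x\<bar> \<le> B"
    using continuous_on_compact_bound[OF compact_Icc R] by auto
  show ?thesis
  proof (rule set_integrable_bound)
    show "set_integrable lborel {0<..<1} (\<lambda>x. B\<^sup>2 * x powr (2 * \<beta> - \<alpha>))"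
      using set_integrable_powr_01[OF exponent] by auto
    show "set_borel_measurable lborel {0<..<1} (\<lambda>x. (x powr (\<alpha> / 2) * g x)\<^sup>2)"
      by (rule set_borel_measurable_greaterThanLessThan_continuous) (auto intro!: continuous_intros g)
    show "AE x in lborel. x \<in> {0<..<1} \<longrightarrow>
        norm ((x powr (\<alpha> / 2) * g x)\<^sup>2) \<le> norm (B\<^sup>2 * x powr (2 * \<beta> - \<alpha>))"
    proof (rule AE_I2, intro impI)
      fix x :: real assume x: "x \<in> {0<..<1}"
      have "x powr (\<alpha> / 2) * g x = x powr (- \<alpha> / 2) * (x powr \<alpha> * g x)"
        using x by (simp add: powr_add[symmetric])
      also have "\<dots> = x powr (\<beta> - \<alpha> / 2) * R x"
        using x flux[of x] by (simp add: powr_add[symmetric])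
      finally have "norm ((x powr (\<alpha> / 2) * g x)\<^sup>2) = (x powr (\<beta> - \<alpha> / 2))\<^sup>2 * (R x)\<^sup>2"
        by (simp only: power_mult_distrib real_norm_def abs_power2 abs_mult)
      also have "(x powr (\<beta> - \<alpha> / 2))\<^sup>2 = x powr (2 * \<beta> - \<alpha>)"
        using x by (simp add: powr_power algebra_simps)
      finally have "norm ((x powr (\<alpha> / 2) * g x)\<^sup>2) = (R x)\<^sup>2 * x powr (2 * \<beta> - \<alpha>)"
        by (simp add: mult.commute)
      also have "\<dots> \<le> B\<^sup>2 * x powr (2 * \<beta> - \<alpha>)"
        by (rule mult_right_mono) (use B[of x] x abs_le_square_iff in force)+
      finally show "norm ((x powr (\<alpha> / 2) * g x)\<^sup>2) \<le> norm (B\<^sup>2 * x powr (2 * \<beta> - \<alpha>))"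
        by simp
    qed
  qed
qed

lemma domAbar_classical:
  fixes v g Q w :: "real \<Rightarrow> real"
  assumes v: "continuous_on {0..1} v" and g: "continuous_on {0<..1} g"
    and Q: "continuous_on {0..1} Q" and w: "continuous_on {0..1} w"
    and dv: "\<And>x. 0 < x \<Longrightarrow> x < 1 \<Longrightarrow> (v has_real_derivative g x) (at x)"
    and dQ: "\<And>x. 0 < x \<Longrightarrow> x < 1 \<Longrightarrow> (Q has_real_derivative w x) (at x)"
    and flux: "\<And>x. 0 < x \<Longrightarrow> x < 1 \<Longrightarrow> x powr \<alpha> * g x = Q x"
    and weighted: "set_integrable lborel {0<..<1} (\<lambda>x. (x powr (\<alpha> / 2) * g x)\<^sup>2)"
    and v1: "v 1 = 0"
    and bc: "if \<alpha> < 1 then v 0 = 0 else Q 0 = 0"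
  shows "domAbar \<alpha> v w"
  unfolding domAbar_def
proof (intro conjI exI)
  show "L2I w" by (rule L2I_continuous[OF w])
  show "H1a \<alpha> v g"
    unfolding H1a_def
  proof (intro conjI ballI weighted)
    show "L2I v" by (rule L2I_continuous[OF v])
    show "set_borel_measurable lborel {0<..<1} g"
      by (rule set_borel_measurable_greaterThanLessThan_continuous)
         (rule continuous_on_subset[OF g], auto)
    fix x :: real assume x: "x \<in> {0<..<1}"
    have gx: "continuous_on {x..1} g" by (rule continuous_on_subset[OF g]) (use x in auto)
    show "set_integrable lborel {x..1} g" by (rule borel_integrable_atLeastAtMost'[OF gx])
    have "(LINT s:{x..1}|lborel. g s) = v 1 - v x"
      by (rule set_integral_atLeastAtMost_FTC[OF _ _ _ gx])
         (use x dv in \<open>auto intro!: continuous_on_subset[OF v]\<close>)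
    then show "v x = - (LINT s:{x..1}|lborel. g s)" using v1 by simp
  qed
  show "AE x in lborel. x \<in> {0<..<1} \<longrightarrow> x powr \<alpha> * g x = Q 0 + (LINT s:{0<..<x}|lborel. w s)"
  proof (rule AE_I2, intro impI)
    fix x :: real assume x: "x \<in> {0<..<1}"
    have "(LINT s:{0<..<x}|lborel. w s) = Q x - Q 0"
      by (rule set_integral_greaterThanLessThan_FTC)
         (use x dQ in \<open>auto intro!: set_integrable_greaterThanLessThan_continuous
           continuous_on_subset[OF Q] continuous_on_subset[OF w]\<close>)
    then show "x powr \<alpha> * g x = Q 0 + (LINT s:{0<..<x}|lborel. w s)"
      using flux[of x] x by simp
  qed
  have "(v \<longlongrightarrow> v 0) (at 0 within {0..1})"
    using v unfolding continuous_on_def by simp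
  then show "if \<alpha> < 1 then (v \<longlongrightarrow> 0) (at_right 0) else Q 0 = 0"
    using bc by (simp add: at_within_Icc_at_right split: if_splits)
qed

lemma domAbar_bessel_ge_1:
  fixes \<alpha> \<nu> \<kappa> :: real
  assumes \<alpha>: "1 \<le> \<alpha>" "\<alpha> < 2" and \<nu>_def: "\<nu> = (\<alpha> - 1) / (2 - \<alpha>)" and \<kappa>: "bessel_J \<nu> \<kappa> = 0"
  shows "domAbar \<alpha> (\<lambda>x. bessel_J \<nu> (\<kappa> * x powr (2 - \<alpha>)))
    (\<lambda>x. - \<kappa> * (2 - \<alpha>)\<^sup>2 * bessel_J \<nu> (\<kappa> * x powr (2 - \<alpha>)))"
proof -
  define \<gamma> where "\<gamma> = 2 - \<alpha>"
  have \<gamma>: "\<gamma> > 0" and \<nu>: "\<nu> \<ge> 0" and \<gamma>\<nu>: "\<gamma> * (\<nu> + 1) = 1"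
    using \<alpha> by (auto simp: \<gamma>_def \<nu>_def field_simps)
  define v where "v = (\<lambda>x. bessel_J \<nu> (\<kappa> * x powr \<gamma>))"
  define R where "R = (\<lambda>x. \<kappa> * \<gamma> * bessel_J' \<nu> (\<kappa> * x powr \<gamma>))"
  define g where "g = (\<lambda>x. x powr (\<gamma> - 1) * R x)"
  define Q where "Q = (\<lambda>x. x * R x)"
  have v: "continuous_on {0..1} v" unfolding v_def using \<gamma> \<nu> by (intro continuous_intros) auto
  have R: "continuous_on {0..1} R" unfolding R_def using \<gamma> \<nu> by (intro continuous_intros) auto
  have dv: "(v has_real_derivative g x) (at x)" if "x > 0" for x
  proof -
    have "(v has_real_derivative bessel_J' \<nu> (\<kappa> * x powr \<gamma>) * (\<kappa> * (\<gamma> * x powr (\<gamma> - 1)))) (at x)"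
      unfolding v_def using that \<nu>
      by (auto intro!: derivative_eq_intros DERIV_chain2[OF bessel_J_has_real_derivative])
    then show ?thesis by (simp add: g_def R_def algebra_simps)
  qed
  have dQ: "(Q has_real_derivative - \<kappa> * \<gamma>\<^sup>2 * v x) (at x)" if x: "x > 0" for x
  proof -
    define s where "s = \<kappa> * x powr \<gamma>"
    have "(Q has_real_derivative \<kappa> * \<gamma> * (bessel_J' \<nu> s + \<gamma> * (s * bessel_J'' \<nu> s))) (at x)"
      unfolding Q_def R_def s_def using x \<nu>
      by (auto intro!: derivative_eq_intros DERIV_chain2[OF bessel_J'_has_real_derivative]
          simp: algebra_simps powr_diff)
    also have "\<kappa> * \<gamma> * (bessel_J' \<nu> s + \<gamma> * (s * bessel_J'' \<nu> s))
        = \<kappa> * \<gamma> * ((1 - \<gamma> * (\<nu> + 1)) * bessel_J' \<nu> s - \<gamma> * bessel_J \<nu> s)"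
      unfolding bessel_J_ode[OF \<nu>] by (simp add: algebra_simps)
    also have "\<dots> = - \<kappa> * \<gamma>\<^sup>2 * v x"
      using \<gamma>\<nu> by (simp add: v_def s_def power2_eq_square)
    finally show ?thesis .
  qed
  have flux: "x powr \<alpha> * g x = x powr 1 * R x" if "x > 0" for x
    using that by (simp add: g_def powr_add[symmetric] \<gamma>_def)
  have "domAbar \<alpha> v (\<lambda>x. - \<kappa> * \<gamma>\<^sup>2 * v x)"
  proof (rule domAbar_classical[where g = g and Q = Q])
    show "continuous_on {0<..1} g"
      unfolding g_def using R by (auto intro!: continuous_intros continuous_on_subset[OF R])
    show "set_integrable lborel {0<..<1} (\<lambda>x. (x powr (\<alpha> / 2) * g x)\<^sup>2)"
      by (rule set_integrable_weighted_square[OF _ R flux])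
         (use \<alpha> in \<open>auto simp: g_def intro!: continuous_intros continuous_on_subset[OF R]\<close>)
  qed (use v R dv dQ flux \<alpha> \<kappa> in \<open>auto simp: Q_def v_def intro!: continuous_intros\<close>)
  then show ?thesis by (simp add: v_def \<gamma>_def)
qed

lemma domAbar_bessel_lt_1:
  fixes \<alpha> \<nu> \<kappa> :: real
  assumes \<alpha>: "0 < \<alpha>" "\<alpha> < 1" and \<nu>_def: "\<nu> = (1 - \<alpha>) / (2 - \<alpha>)" and \<kappa>: "bessel_J \<nu> \<kappa> = 0"
  shows "domAbar \<alpha> (\<lambda>x. x powr (1 - \<alpha>) * bessel_J \<nu> (\<kappa> * x powr (2 - \<alpha>)))
    (\<lambda>x. - \<kappa> * (2 - \<alpha>)\<^sup>2 * (x powr (1 - \<alpha>) * bessel_J \<nu> (\<kappa> * x powr (2 - \<alpha>))))"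
proof -
  define \<gamma> where "\<gamma> = 2 - \<alpha>"
  define p where "p = 1 - \<alpha>"
  have \<gamma>: "\<gamma> > 1" "\<gamma> - 1 = p" and p: "p > 0" and \<nu>: "\<nu> \<ge> 0" and \<gamma>\<nu>: "p = \<gamma> * \<nu>"
    using \<alpha> by (auto simp: \<gamma>_def p_def \<nu>_def field_simps)
  define V where "V = (\<lambda>x. bessel_J \<nu> (\<kappa> * x powr \<gamma>))"
  define v where "v = (\<lambda>x. x powr p * V x)"
  define g where "g = (\<lambda>x. p * x powr (p - 1) * V x
      + \<kappa> * \<gamma> * x powr (p + \<gamma> - 1) * bessel_J' \<nu> (\<kappa> * x powr \<gamma>))"
  \<comment> \<open>\<open>Q\<close> is the flux \<open>x^\<alpha> v'\<close>, and \<open>G' = - J\<close> by the Bessel equation.\<close>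
  define G where "G = (\<lambda>s. \<nu> * bessel_J \<nu> s + s * bessel_J' \<nu> s)"
  define Q where "Q = (\<lambda>x. \<gamma> * G (\<kappa> * x powr \<gamma>))"
  have dG: "(G has_real_derivative - bessel_J \<nu> s) (at s)" for s
    unfolding G_def by (rule bessel_J_combination_has_real_derivative[OF \<nu>])
  have V: "continuous_on {0..1} V" unfolding V_def using \<gamma> \<nu> by (intro continuous_intros) auto
  have v: "continuous_on {0..1} v" unfolding v_def using p by (intro continuous_intros V) auto
  have Q: "continuous_on {0..1} Q" unfolding Q_def G_def using \<gamma> \<nu> by (intro continuous_intros) auto
  have dv: "(v has_real_derivative g x) (at x)" if x: "x > 0" for x
  proof -
    have "(v has_real_derivative p * x powr (p - 1) * V x
        + x powr p * (bessel_J' \<nu> (\<kappa> * x powr \<gamma>) * (\<kappa> * (\<gamma> * x powr (\<gamma> - 1))))) (at x)"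
      unfolding v_def V_def using x \<nu>
      by (auto intro!: derivative_eq_intros DERIV_chain2[OF bessel_J_has_real_derivative]
          simp: algebra_simps)
    moreover have "x powr p * (bessel_J' \<nu> (\<kappa> * x powr \<gamma>) * (\<kappa> * (\<gamma> * x powr (\<gamma> - 1))))
        = \<kappa> * \<gamma> * x powr (p + \<gamma> - 1) * bessel_J' \<nu> (\<kappa> * x powr \<gamma>)"
      using x by (simp add: powr_add[symmetric] add_diff_eq)
    ultimately show ?thesis
      unfolding g_def by simp
  qed
  have dQ: "(Q has_real_derivative - \<kappa> * \<gamma>\<^sup>2 * v x) (at x)" if x: "x > 0" for x
  proof -
    have "(Q has_real_derivative \<gamma> * (- bessel_J \<nu> (\<kappa> * x powr \<gamma>) * (\<kappa> * (\<gamma> * x powr (\<gamma> - 1))))) (at x)"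
      unfolding Q_def using x by (auto intro!: derivative_eq_intros DERIV_chain2[OF dG])
    then show ?thesis
      using \<gamma> by (simp add: v_def V_def power2_eq_square algebra_simps)
  qed
  have flux: "x powr \<alpha> * g x = x powr 0 * Q x" if x: "x > 0" for x
  proof -
    have e1: "x powr \<alpha> * x powr (p - 1) = 1"
      and e2: "x powr \<alpha> * x powr (p + \<gamma> - 1) = x powr \<gamma>"
      using x by (simp_all add: powr_add[symmetric] p_def \<gamma>_def)
    have "x powr \<alpha> * g x = p * (x powr \<alpha> * x powr (p - 1)) * V x
        + \<kappa> * \<gamma> * (x powr \<alpha> * x powr (p + \<gamma> - 1)) * bessel_J' \<nu> (\<kappa> * x powr \<gamma>)"
      unfolding g_def by (simp only: ac_simps distrib_left)
    then show ?thesis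
      using x unfolding e1 e2 by (simp add: Q_def G_def V_def \<gamma>\<nu> algebra_simps)
  qed
  have "domAbar \<alpha> v (\<lambda>x. - \<kappa> * \<gamma>\<^sup>2 * v x)"
  proof (rule domAbar_classical[where g = g and Q = Q])
    show "continuous_on {0<..1} g"
      unfolding g_def V_def using \<gamma> \<nu> by (auto intro!: continuous_intros)
    show "set_integrable lborel {0<..<1} (\<lambda>x. (x powr (\<alpha> / 2) * g x)\<^sup>2)"
      by (rule set_integrable_weighted_square[OF _ Q flux])
         (use \<alpha> \<gamma> \<nu> in \<open>auto simp: g_def V_def intro!: continuous_intros\<close>)
  qed (use v Q dv dQ flux \<alpha> \<kappa> p in \<open>auto simp: v_def V_def Q_def G_def intro!: continuous_intros\<close>)
  then show ?thesis by (simp add: v_def V_def \<gamma>_def p_def)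
qed

lemma eigenfunction_Abar:
  fixes \<alpha> :: real
  assumes \<alpha>: "0 < \<alpha>" "\<alpha> < 2"
  obtains v lam where "domAbar \<alpha> v (\<lambda>x. lam * v x)" "L2I v" "ipI v v > 0"
proof -
  define \<nu> where "\<nu> = \<bar>1 - \<alpha>\<bar> / (2 - \<alpha>)"
  have "\<nu> \<ge> 0" using \<alpha> by (simp add: \<nu>_def)
  then obtain \<kappa> where \<kappa>: "bessel_J \<nu> \<kappa> = 0" using bessel_J_has_positive_zero by blast
  define V where "V = (\<lambda>x. bessel_J \<nu> (\<kappa> * x powr (2 - \<alpha>)))"
  have V: "continuous_on {0..1} V" and V0: "V 0 = 1"
    using \<alpha> \<open>\<nu> \<ge> 0\<close> by (auto simp: V_def intro!: continuous_intros)
  show ?thesis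
  proof (cases "\<alpha> < 1")
    case True
    define v where "v = (\<lambda>x. x powr (1 - \<alpha>) * V x)"
    have v: "continuous_on {0..1} v" unfolding v_def using True by (intro continuous_intros V) auto
    obtain x0 where "x0 \<in> {0<..<1}" "V x0 \<noteq> 0"
      using continuous_on_nonzero_near_0[OF V] V0 by auto
    then have "ipI v v > 0" by (intro ipI_self_pos[OF v, of x0]) (auto simp: v_def)
    moreover have "domAbar \<alpha> v (\<lambda>x. - \<kappa> * (2 - \<alpha>)\<^sup>2 * v x)"
      using domAbar_bessel_lt_1[OF \<alpha>(1) True _ \<kappa>] True by (simp add: v_def V_def \<nu>_def)
    ultimately show ?thesis using that L2I_continuous[OF v] by blast
  next
    case False
    have "ipI V V > 0" by (rule ipI_self_pos[OF V, of 0]) (simp_all add: V0)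
    moreover have "domAbar \<alpha> V (\<lambda>x. - \<kappa> * (2 - \<alpha>)\<^sup>2 * V x)"
      using domAbar_bessel_ge_1[OF _ \<alpha>(2) _ \<kappa>] False by (simp add: V_def \<nu>_def)
    ultimately show ?thesis using that L2I_continuous[OF V] by blast
  qed
qed

section \<open>Uncontrolled modes\<close>

lemma y_mode_backward_unique:
  assumes sol: "is_solution \<alpha> T a b c d E F G1 G2 u y0 z0 y z"
    and T: "T > 0" and a: "Linfty T a"
    and v: "domA v (\<lambda>x. lam * v x)"
    and uncontrolled: "\<forall>s\<in>{0<..<T}. s \<notin> E"
    and decoupled: "AE s in lborel. s \<in> {0<..<T} \<longrightarrow> b s = 0"
    and final: "ipI (y T) v = 0"
  shows "ipI y0 v = 0"
proof -
  define f where "f = (\<lambda>s. ipI (y s) (\<lambda>x. lam * v x) + a s * ipI (y s) v + b s * ipI (z s) v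
    + indicator E s * ipI (\<lambda>x. indicator G1 x * u s x) v)"
  have eq: "set_integrable lborel {0..t} f \<and> ipI (y t) v = ipI y0 v + (LINT s:{0..t}|lborel. f s)"
    if "t \<in> {0..T}" for t
    using sol v that unfolding is_solution_def f_def Let_def by blast
  obtain M where M: "AE s in lborel. s \<in> {0<..<T} \<longrightarrow> \<bar>a s\<bar> \<le> M"
    using a unfolding Linfty_def by auto
  show ?thesis
  proof (rule volterra_backward_uniqueness[OF T, where h = "\<lambda>t. ipI (y t) v"])
    show "AE s in lborel. s \<in> {0<..<T} \<longrightarrow> f s = (lam + a s) * ipI (y s) v"
      using decoupled
      by eventually_elim (use uncontrolled in \<open>auto simp: f_def ipI_scale_right algebra_simps\<close>)
    show "AE s in lborel. s \<in> {0<..<T} \<longrightarrow> \<bar>lam + a s\<bar> \<le> \<bar>lam\<bar> + M"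
      using M by eventually_elim auto
  qed (use eq T final in auto)
qed

lemma z_mode_backward_unique:
  assumes sol: "is_solution \<alpha> T a b c d E F G1 G2 u y0 z0 y z"
    and T: "T > 0" and d: "Linfty T d"
    and v: "domAbar \<alpha> v (\<lambda>x. lam * v x)"
    and uncontrolled: "\<forall>s\<in>{0<..<T}. s \<notin> F"
    and decoupled: "AE s in lborel. s \<in> {0<..<T} \<longrightarrow> c s = 0"
    and final: "ipI (z T) v = 0"
  shows "ipI z0 v = 0"
proof -
  define f where "f = (\<lambda>s. ipI (z s) (\<lambda>x. lam * v x) + c s * ipI (y s) v + d s * ipI (z s) v
    + indicator F s * ipI (\<lambda>x. indicator G2 x * u s x) v)"
  have eq: "set_integrable lborel {0..t} f \<and> ipI (z t) v = ipI z0 v + (LINT s:{0..t}|lborel. f s)"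
    if "t \<in> {0..T}" for t
    using sol v that unfolding is_solution_def f_def Let_def by blast
  obtain M where M: "AE s in lborel. s \<in> {0<..<T} \<longrightarrow> \<bar>d s\<bar> \<le> M"
    using d unfolding Linfty_def by auto
  show ?thesis
  proof (rule volterra_backward_uniqueness[OF T, where h = "\<lambda>t. ipI (z t) v"])
    show "AE s in lborel. s \<in> {0<..<T} \<longrightarrow> f s = (lam + d s) * ipI (z s) v"
      using decoupled
      by eventually_elim (use uncontrolled in \<open>auto simp: f_def ipI_scale_right algebra_simps\<close>)
    show "AE s in lborel. s \<in> {0<..<T} \<longrightarrow> \<bar>lam + d s\<bar> \<le> \<bar>lam\<bar> + M"
      using M by eventually_elim auto
  qed (use eq T final in auto)
qed

lemma y_not_null_controllable:
  assumes T: "T > 0" and a: "Linfty T a"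
    and uncontrolled: "\<forall>s\<in>{0<..<T}. s \<notin> E"
    and decoupled: "AE s in lborel. s \<in> {0<..<T} \<longrightarrow> b s = 0"
  obtains y0 where "L2I y0"
    and "\<And>u y z. is_solution \<alpha> T a b c d E F G1 G2 u y0 z0 y z
           \<Longrightarrow> \<not> (AE x in lborel. x \<in> {0<..<1} \<longrightarrow> y T x = 0)"
proof -
  obtain v lam where v: "domA v (\<lambda>x. lam * v x)" "L2I v" "ipI v v > 0"
    by (rule eigenfunction_A)
  show ?thesis
  proof (rule that[OF v(2)])
    fix u y z assume sol: "is_solution \<alpha> T a b c d E F G1 G2 u v z0 y z"
    show "\<not> (AE x in lborel. x \<in> {0<..<1} \<longrightarrow> y T x = 0)"
    proof
      assume "AE x in lborel. x \<in> {0<..<1} \<longrightarrow> y T x = 0"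
      then have "ipI v v = 0"
        by (rule y_mode_backward_unique[OF sol T a v(1) uncontrolled decoupled ipI_AE_zero_left])
      with v(3) show False by simp
    qed
  qed
qed

lemma z_not_null_controllable:
  assumes T: "T > 0" and \<alpha>: "0 < \<alpha>" "\<alpha> < 2" and d: "Linfty T d"
    and uncontrolled: "\<forall>s\<in>{0<..<T}. s \<notin> F"
    and decoupled: "AE s in lborel. s \<in> {0<..<T} \<longrightarrow> c s = 0"
  obtains z0 where "L2I z0"
    and "\<And>u y z. is_solution \<alpha> T a b c d E F G1 G2 u y0 z0 y z
           \<Longrightarrow> \<not> (AE x in lborel. x \<in> {0<..<1} \<longrightarrow> z T x = 0)"
proof -
  obtain v lam where v: "domAbar \<alpha> v (\<lambda>x. lam * v x)" "L2I v" "ipI v v > 0"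
    by (rule eigenfunction_Abar[OF \<alpha>])
  show ?thesis
  proof (rule that[OF v(2)])
    fix u y z assume sol: "is_solution \<alpha> T a b c d E F G1 G2 u y0 v y z"
    show "\<not> (AE x in lborel. x \<in> {0<..<1} \<longrightarrow> z T x = 0)"
    proof
      assume "AE x in lborel. x \<in> {0<..<1} \<longrightarrow> z T x = 0"
      then have "ipI v v = 0"
        by (rule z_mode_backward_unique[OF sol T d v(1) uncontrolled decoupled ipI_AE_zero_left])
      with v(3) show False by simp
    qed
  qed
qed

theorem theorem1p3:
  fixes T \<alpha> :: real and G1 G2 E F :: "real set" and tp :: "nat \<Rightarrow> real"
    and a b c d :: "real \<Rightarrow> real"
  assumes "T > 0" and "0 < \<alpha>" and "\<alpha> < 2"
    and "open G1" and "open G2" and "G1 \<noteq> {}" and "G2 \<noteq> {}"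
    and "G1 \<subseteq> {0<..<1}" and "G2 \<subseteq> {0<..<1}" and "G1 \<inter> G2 = {}"
    and "Linfty T a" and "Linfty T b" and "Linfty T c" and "Linfty T d"
    and "\<forall>j. tp j \<in> {0..T}"
    and "E = (\<Union>i\<in>{1..}. {tp (2*i-1)<..<tp (2*i)})"
    and "F = (\<Union>i\<in>{1..}. {tp (2*i)<..<tp (2*i+1)})"
    and "E \<inter> F = {}"
    and "\<forall>s\<in>{0<..<T}. s \<notin> range tp \<longrightarrow> s \<in> E \<union> F"
    and "((\<forall>s\<in>{0<..<T}. s \<in> E) \<and> (AE s in lborel. s \<in> {0<..<T} \<longrightarrow> c s = 0))
       \<or> ((\<forall>s\<in>{0<..<T}. s \<in> F) \<and> (AE s in lborel. s \<in> {0<..<T} \<longrightarrow> b s = 0))"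
  shows "\<exists>y0 z0. L2I y0 \<and> L2I z0 \<and>
           \<not> (\<exists>u y z. control_L2 T (G1 \<union> G2) u
                 \<and> is_solution \<alpha> T a b c d E F G1 G2 u y0 z0 y z
                 \<and> (AE x in lborel. x \<in> {0<..<1} \<longrightarrow> y T x = 0 \<and> z T x = 0))"
  using assms(20)
proof (elim disjE conjE)
  assume "\<forall>s\<in>{0<..<T}. s \<in> E" and c: "AE s in lborel. s \<in> {0<..<T} \<longrightarrow> c s = 0"
  then have "\<forall>s\<in>{0<..<T}. s \<notin> F" using \<open>E \<inter> F = {}\<close> by blast
  then obtain z0 where z0: "L2I z0"
    and no_control: "\<And>u y z. is_solution \<alpha> T a b c d E F G1 G2 u (\<lambda>x. 0) z0 y z
        \<Longrightarrow> \<not> (AE x in lborel. x \<in> {0<..<1} \<longrightarrow> z T x = 0)"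
    using z_not_null_controllable[OF assms(1-3,14) _ c] by blast
  have "AE x in lborel. x \<in> {0<..<1} \<longrightarrow> z T x = 0"
    if "AE x in lborel. x \<in> {0<..<1} \<longrightarrow> y T x = 0 \<and> z T x = 0" for y z :: "real \<Rightarrow> real \<Rightarrow> real"
    using that by (rule eventually_mono) simp
  then show ?thesis using z0 no_control L2I_zero by blast
next
  assume "\<forall>s\<in>{0<..<T}. s \<in> F" and b: "AE s in lborel. s \<in> {0<..<T} \<longrightarrow> b s = 0"
  then have "\<forall>s\<in>{0<..<T}. s \<notin> E" using \<open>E \<inter> F = {}\<close> by blast
  then obtain y0 where y0: "L2I y0"
    and no_control: "\<And>u y z. is_solution \<alpha> T a b c d E F G1 G2 u y0 (\<lambda>x. 0) y z
        \<Longrightarrow> \<not> (AE x in lborel. x \<in> {0<..<1} \<longrightarrow> y T x = 0)"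
    using y_not_null_controllable[OF assms(1,11) _ b] by blast
  have "AE x in lborel. x \<in> {0<..<1} \<longrightarrow> y T x = 0"
    if "AE x in lborel. x \<in> {0<..<1} \<longrightarrow> y T x = 0 \<and> z T x = 0" for y z :: "real \<Rightarrow> real \<Rightarrow> real"
    using that by (rule eventually_mono) simp
  then show ?thesis using y0 no_control L2I_zero by blast
qed

end
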